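(* Assume Assumption 1, Assumption 2 and the null hypothesis $H_0:\ T_i(1)=T_i(0)$ for all $i$, and condition on $\boldsymbol{T}(1),\boldsymbol{T}(0)$. Then for each $1\le k\le K$, $$D_k\sim\mathrm{Bin}(d_k,g_k),\qquad N_{1k}\sim\mathrm{Bin}(n_k,g_k\phi_k),\qquad N_k\sim\mathrm{Bin}(n_k,g_k).$$
   Context: There are $n$ units. Unit $i$ has potential event times $T_i(1),T_i(0)\ge 0$, potential censoring times $C_i(1),C_i(0)\in[0,\infty]$, and treatment indicator $Z_i\in\{0,1\}$; bold letters denote $n$-vectors. Assumption 1: conditional on $\boldsymbol{T}(1),\boldsymbol{T}(0),\boldsymbol{C}(1),\boldsymbol{C}(0)$, the $Z_i$ are i.i.d. Bernoulli$(p_1)$, $p_1=1-p_0\in(0,1)$. Assumption 2: $(\boldsymbol{C}(1),\boldsymbol{C}(0))$ is independent of $(\boldsymbol{T}(1),\boldsymbol{T}(0))$ and the pairs $(C_i(1),C_i(0))$ are i.i.d. across $i$. $G_z(c)=\Pr(C_i(z)\ge c)$, $G(t)=p_1G_1(t)+p_0G_0(t)$. Realized: $W_i=\min\{T_i,C_i\}$, $\Delta_i=\mathbb{1}(T_i\le C_i)$ with $T_i=Z_iT_i(1)+(1-Z_i)T_i(0)$, $C_i=Z_iC_i(1)+(1-Z_i)C_i(0)$. Let $t_1<\dots<t_K$ be the distinct values of $\{T_i(0)\}$, $d_k=\#\{i:T_i(0)=t_k\}$, $n_k=\#\{i:T_i(0)\ge t_k\}$, $g_k=G(t_k)$, $\phi_k=p_1G_1(t_k)/G(t_k)$;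 $N_{1k}=\sum_iZ_i\mathbb{1}(W_i\ge t_k)$, $N_k=\sum_i\mathbb{1}(W_i\ge t_k)$, $D_k=\sum_i\Delta_i\mathbb{1}(W_i=t_k)$. $\mathrm{Bin}(m,p)$ denotes the binomial distribution. *)

theory Defs
  imports "HOL-Probability.Probability"
begin

text \<open>Units are indexed by {..<n}. Event times are nonnegative reals; censoring
times take values in [0,\<infinity>], modelled by ennreal.\<close>

definition Tobs :: "(nat \<Rightarrow> 'a \<Rightarrow> bool) \<Rightarrow> (nat \<Rightarrow> real) \<Rightarrow> (nat \<Rightarrow> real) \<Rightarrow> nat \<Rightarrow> 'a \<Rightarrow> real" where
  "Tobs Z T1 T0 i \<omega> = (if Z i \<omega> then T1 i else T0 i)"

definition Cobs :: "(nat \<Rightarrow> 'a \<Rightarrow> bool) \<Rightarrow> (nat \<Rightarrow> 'a \<Rightarrow> ennreal) \<Rightarrow> (nat \<Rightarrow> 'a \<Rightarrow> ennreal) \<Rightarrow> nat \<Rightarrow> 'a \<Rightarrow> ennreal" where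
  "Cobs Z C1 C0 i \<omega> = (if Z i \<omega> then C1 i \<omega> else C0 i \<omega>)"

definition Wobs where
  "Wobs Z T1 T0 C1 C0 i \<omega> = min (ennreal (Tobs Z T1 T0 i \<omega>)) (Cobs Z C1 C0 i \<omega>)"

definition Delta where
  "Delta Z T1 T0 C1 C0 i \<omega> = (ennreal (Tobs Z T1 T0 i \<omega>) \<le> Cobs Z C1 C0 i \<omega>)"

definition N1cnt where
  "N1cnt n Z T1 T0 C1 C0 t \<omega> = card {i\<in>{..<n}. Z i \<omega> \<and> ennreal t \<le> Wobs Z T1 T0 C1 C0 i \<omega>}"

definition Ncnt where
  "Ncnt n Z T1 T0 C1 C0 t \<omega> = card {i\<in>{..<n}. ennreal t \<le> Wobs Z T1 T0 C1 C0 i \<omega>}"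

definition Dcnt where
  "Dcnt n Z T1 T0 C1 C0 t \<omega> = card {i\<in>{..<n}. Delta Z T1 T0 C1 C0 i \<omega> \<and> Wobs Z T1 T0 C1 C0 i \<omega> = ennreal t}"

definition Kval :: "nat \<Rightarrow> (nat \<Rightarrow> real) \<Rightarrow> nat" where
  "Kval n T0 = card (T0 ` {..<n})"

definition tval :: "nat \<Rightarrow> (nat \<Rightarrow> real) \<Rightarrow> nat \<Rightarrow> real" where
  "tval n T0 k = sorted_list_of_set (T0 ` {..<n}) ! (k - 1)"

definition dcnt :: "nat \<Rightarrow> (nat \<Rightarrow> real) \<Rightarrow> real \<Rightarrow> nat" where
  "dcnt n T0 t = card {i\<in>{..<n}. T0 i = t}"

definition ncnt :: "nat \<Rightarrow> (nat \<Rightarrow> real) \<Rightarrow> real \<Rightarrow> nat" where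
  "ncnt n T0 t = card {i\<in>{..<n}. t \<le> T0 i}"

end

(*
  Under H0 the observed event time of unit i is T_i(0) whatever its treatment.  Hence
  W_i >= t holds iff T_i(0) >= t and the censoring time selected by Z_i is >= t, and a
  death is observed at t_k iff T_i(0) = t_k and that censoring time is >= t_k.  Each of
  D_k, N_k, N_1k thus counts the units of a fixed set (of size d_k or n_k) whose selected
  censoring time lies in a fixed set.  The treatment vector is independent of the
  censoring vector and both have independent components, so these indicators are
  independent across units, each with success probability
  sum_z P(Z_i = z) P(C_i(z) >= t_k) = p1 G1(t_k) + p0 G0(t_k)  (p1 G1(t_k) for N_1k).
*)

theory Submission
  imports Defs
begin

lemma (in prob_space) prob_indep_vars_Ball:
  assumes X: "indep_vars M' X I" and J: "J \<subseteq> I" "finite J"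
    and S: "\<And>i. i \<in> J \<Longrightarrow> S i \<in> sets (M' i)"
  shows "prob {\<omega>\<in>space M. \<forall>i\<in>J. X i \<omega> \<in> S i} = (\<Prod>i\<in>J. prob {\<omega>\<in>space M. X i \<omega> \<in> S i})"
proof (cases "J = {}")
  case False
  have "{\<omega>\<in>space M. \<forall>i\<in>J. X i \<omega> \<in> S i} = (\<Inter>i\<in>J. X i -` S i \<inter> space M)"
    using False by auto
  then show ?thesis
    using indep_varsD[OF X False J(2,1) S] by (simp add: vimage_def Int_def conj_commute)
qed (simp add: prob_space)

lemma (in prob_space) prob_conj_eq_mult_of_distr_Pair:
  assumes X: "random_variable S X" and Y: "random_variable T Y"
    and XY: "distr M (S \<Otimes>\<^sub>M T) (\<lambda>\<omega>. (X \<omega>, Y \<omega>)) = distr M S X \<Otimes>\<^sub>M distr M T Y"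
    and sets: "A \<in> sets S" "B \<in> sets T"
  shows "prob {\<omega>\<in>space M. X \<omega> \<in> A \<and> Y \<omega> \<in> B} = prob {\<omega>\<in>space M. X \<omega> \<in> A} * prob {\<omega>\<in>space M. Y \<omega> \<in> B}"
proof -
  interpret Y: prob_space "distr M T Y" by (rule prob_space_distr[OF Y])
  have "prob {\<omega>\<in>space M. X \<omega> \<in> A \<and> Y \<omega> \<in> B} = measure (distr M (S \<Otimes>\<^sub>M T) (\<lambda>\<omega>. (X \<omega>, Y \<omega>))) (A \<times> B)"
    using X Y sets by (subst measure_distr) (auto intro!: arg_cong[where f=prob])
  also have "\<dots> = measure (distr M S X) A * measure (distr M T Y) B"
    unfolding XY measure_def using sets by (simp add: Y.emeasure_pair_measure_Times enn2real_mult)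
  also have "\<dots> = prob {\<omega>\<in>space M. X \<omega> \<in> A} * prob {\<omega>\<in>space M. Y \<omega> \<in> B}"
    using X Y sets by (simp add: measure_distr vimage_def Int_def conj_commute)
  finally show ?thesis .
qed

lemma (in prob_space) prob_Ball_selected_eq_prod:
  fixes Z :: "'i \<Rightarrow> 'a \<Rightarrow> 'b::finite" and C :: "'i \<Rightarrow> 'a \<Rightarrow> 'c"
  assumes I: "finite I" and A: "A \<subseteq> I"
    and ZC: "distr M ((\<Pi>\<^sub>M i\<in>I. count_space UNIV) \<Otimes>\<^sub>M (\<Pi>\<^sub>M i\<in>I. N)) (\<lambda>\<omega>. (\<lambda>i\<in>I. Z i \<omega>, \<lambda>i\<in>I. C i \<omega>))
      = distr M (\<Pi>\<^sub>M i\<in>I. count_space UNIV) (\<lambda>\<omega>. \<lambda>i\<in>I. Z i \<omega>) \<Otimes>\<^sub>M distr M (\<Pi>\<^sub>M i\<in>I. N) (\<lambda>\<omega>. \<lambda>i\<in>I. C i \<omega>)"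
    and Z: "indep_vars (\<lambda>_. count_space UNIV) Z I" and C: "indep_vars (\<lambda>_. N) C I"
    and R: "\<And>\<beta> i. i \<in> A \<Longrightarrow> R \<beta> i \<in> sets N"
  shows "prob {\<omega>\<in>space M. \<forall>i\<in>A. C i \<omega> \<in> R (Z i \<omega>) i}
       = (\<Prod>i\<in>A. \<Sum>\<beta>\<in>UNIV. prob {\<omega>\<in>space M. Z i \<omega> = \<beta>} * prob {\<omega>\<in>space M. C i \<omega> \<in> R \<beta> i})"
proof -
  have finA: "finite A" using I A finite_subset by blast
  have Z_rv: "random_variable (count_space UNIV) (Z i)" and C_rv: "random_variable N (C i)" if "i \<in> I" for i
    using Z C that unfolding indep_vars_def by blast+
  have Zv: "random_variable (\<Pi>\<^sub>M i\<in>I. count_space UNIV) (\<lambda>\<omega>. \<lambda>i\<in>I. Z i \<omega>)"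
    using Z_rv by (rule measurable_restrict)
  have Cv: "random_variable (\<Pi>\<^sub>M i\<in>I. N) (\<lambda>\<omega>. \<lambda>i\<in>I. C i \<omega>)"
    using C_rv by (rule measurable_restrict)
  define SZ where "SZ s = {f\<in>space (\<Pi>\<^sub>M i\<in>I. count_space UNIV). \<forall>i\<in>A. f i = s i}" for s :: "'i \<Rightarrow> 'b"
  define SC where "SC s = {f\<in>space (\<Pi>\<^sub>M i\<in>I. N). \<forall>i\<in>A. f i \<in> R (s i) i}" for s
  have SZ: "SZ s \<in> sets (\<Pi>\<^sub>M i\<in>I. count_space UNIV)" for s
    unfolding SZ_def using finA by measurable (use A in auto)
  have SC: "SC s \<in> sets (\<Pi>\<^sub>M i\<in>I. N)" for s
  proof -
    have "Measurable.pred (\<Pi>\<^sub>M i\<in>I. N) (\<lambda>f. f i \<in> R (s i) i)" if "i \<in> A" for i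
      using measurable_sets[OF measurable_component_singleton[of i I "\<lambda>_. N"] R[OF that, of "s i"]] A that
      by (auto simp: Measurable.pred_def vimage_def Int_def conj_commute)
    then show ?thesis
      unfolding SC_def Measurable.pred_def[symmetric] using finA by (rule pred_intros_finite(3)[rotated])
  qed
  define ZE where "ZE s = {\<omega>\<in>space M. (\<lambda>i\<in>I. Z i \<omega>) \<in> SZ s}" for s
  define CE where "CE s = {\<omega>\<in>space M. (\<lambda>i\<in>I. C i \<omega>) \<in> SC s}" for s
  have ZE_eq: "ZE s = {\<omega>\<in>space M. \<forall>i\<in>A. Z i \<omega> = s i}" and CE_eq: "CE s = {\<omega>\<in>space M. \<forall>i\<in>A. C i \<omega> \<in> R (s i) i}" for s
    using A measurable_space[OF Zv] measurable_space[OF Cv] by (auto simp: ZE_def CE_def SZ_def SC_def)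
  have events: "ZE s \<inter> CE s \<in> events" for s
    using measurable_sets[OF Zv SZ] measurable_sets[OF Cv SC]
    by (auto simp: ZE_def CE_def vimage_def Int_def conj_commute)
  have ZE_CE: "prob (ZE s \<inter> CE s) = prob (ZE s) * prob (CE s)" for s
  proof -
    have "ZE s \<inter> CE s = {\<omega>\<in>space M. (\<lambda>i\<in>I. Z i \<omega>) \<in> SZ s \<and> (\<lambda>i\<in>I. C i \<omega>) \<in> SC s}"
      unfolding ZE_def CE_def by blast
    then show ?thesis
      unfolding ZE_def CE_def by (simp only:) (rule prob_conj_eq_mult_of_distr_Pair[OF Zv Cv ZC SZ SC])
  qed
  \<comment> \<open>Split by the treatment pattern s on A; on each piece the two vectors factorize.\<close>
  have "{\<omega>\<in>space M. \<forall>i\<in>A. C i \<omega> \<in> R (Z i \<omega>) i} = (\<Union>s\<in>A \<rightarrow>\<^sub>E UNIV. ZE s \<inter> CE s)"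
    by (auto simp: ZE_eq CE_eq intro!: bexI[of _ "restrict (\<lambda>i. Z i _) A"])
  moreover have "disjoint_family_on (\<lambda>s. ZE s \<inter> CE s) (A \<rightarrow>\<^sub>E UNIV)"
    by (auto simp: disjoint_family_on_def ZE_eq PiE_iff intro: extensionalityI)
  ultimately have "prob {\<omega>\<in>space M. \<forall>i\<in>A. C i \<omega> \<in> R (Z i \<omega>) i} = (\<Sum>s\<in>A \<rightarrow>\<^sub>E UNIV. prob (ZE s \<inter> CE s))"
    using finA events by (simp add: finite_measure_finite_Union[symmetric] finite_PiE image_subset_iff)
  also have "\<dots> = (\<Sum>s\<in>A \<rightarrow>\<^sub>E UNIV. \<Prod>i\<in>A. prob {\<omega>\<in>space M. Z i \<omega> = s i} * prob {\<omega>\<in>space M. C i \<omega> \<in> R (s i) i})"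
    using prob_indep_vars_Ball[OF Z A finA, of "\<lambda>i. {_ i}"] prob_indep_vars_Ball[OF C A finA] R
    by (simp only: ZE_CE) (simp add: ZE_eq CE_eq prod.distrib)
  also have "\<dots> = (\<Prod>i\<in>A. \<Sum>\<beta>\<in>UNIV. prob {\<omega>\<in>space M. Z i \<omega> = \<beta>} * prob {\<omega>\<in>space M. C i \<omega> \<in> R \<beta> i})"
    using finA by (rule prod_sum_PiE[symmetric]) simp
  finally show ?thesis .
qed

lemma (in prob_space) distr_card_eq_binomial_pmf:
  fixes X :: "'i \<Rightarrow> 'a \<Rightarrow> bool"
  assumes A: "finite A" and q: "q \<in> {0..1}"
    and X: "\<And>i. i \<in> A \<Longrightarrow> random_variable (count_space UNIV) (X i)"
    and joint: "\<And>b. prob {\<omega>\<in>space M. \<forall>i\<in>A. X i \<omega> = b i} = (\<Prod>i\<in>A. if b i then q else 1 - q)"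
  shows "distr M (count_space UNIV) (\<lambda>\<omega>. card {i\<in>A. X i \<omega>}) = measure_pmf (binomial_pmf (card A) q)"
proof -
  define E where "E B = {\<omega>\<in>space M. \<forall>i\<in>A. X i \<omega> = (i \<in> B)}" for B
  define S where "S m = {B. B \<subseteq> A \<and> card B = m}" for m
  have E: "E B \<in> events" for B
    unfolding E_def using A X by measurable
  have split: "(\<lambda>\<omega>. card {i\<in>A. X i \<omega>}) -` {m} \<inter> space M = (\<Union>B\<in>S m. E B)" for m
  proof -
    have "(\<forall>i\<in>A. X i \<omega> = (i \<in> B)) \<longleftrightarrow> B = {i\<in>A. X i \<omega>}" if "B \<subseteq> A" for \<omega> B
      using that by blast
    then show ?thesis by (auto simp: S_def E_def)
  qed
  have [measurable]: "random_variable (count_space UNIV) (\<lambda>\<omega>. card {i\<in>A. X i \<omega>})"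
    unfolding measurable_count_space_eq2_countable split using A E by (auto simp: S_def)
  show ?thesis
  proof (rule measure_eqI_countable[where A=UNIV])
    fix m :: nat
    have "disjoint_family_on E (S m)"
      by (auto simp: disjoint_family_on_def E_def S_def)
    then have "prob (\<Union>B\<in>S m. E B) = (\<Sum>B\<in>S m. prob (E B))"
      using A E by (intro finite_measure_finite_Union) (auto simp: S_def)
    also have "\<dots> = (\<Sum>B\<in>S m. q ^ m * (1 - q) ^ (card A - m))"
    proof (rule sum.cong[OF refl])
      fix B assume "B \<in> S m"
      then have B: "B \<subseteq> A" "card B = m" by (auto simp: S_def)
      have "prob (E B) = (\<Prod>i\<in>A. if i \<in> B then q else 1 - q)"
        unfolding E_def by (rule joint)
      also have "\<dots> = q ^ m * (1 - q) ^ (card A - m)"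
        using A B by (simp add: prod.If_cases Int_absorb1 Diff_eq[symmetric] card_Diff_subset finite_subset)
      finally show "prob (E B) = q ^ m * (1 - q) ^ (card A - m)" .
    qed
    also have "\<dots> = (card A choose m) * q ^ m * (1 - q) ^ (card A - m)"
      using n_subsets[OF A] by (simp add: S_def)
    finally show "emeasure (distr M (count_space UNIV) (\<lambda>\<omega>. card {i\<in>A. X i \<omega>})) {m}
        = emeasure (measure_pmf (binomial_pmf (card A) q)) {m}"
      using q by (simp add: emeasure_distr split emeasure_eq_measure emeasure_pmf_single)
  qed simp_all
qed

lemma (in prob_space) distr_card_selected_eq_binomial_pmf:
  fixes Z :: "'i \<Rightarrow> 'a \<Rightarrow> 'b::finite" and C :: "'i \<Rightarrow> 'a \<Rightarrow> 'c"
  assumes I: "finite I" and A: "A \<subseteq> I"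
    and ZC: "distr M ((\<Pi>\<^sub>M i\<in>I. count_space UNIV) \<Otimes>\<^sub>M (\<Pi>\<^sub>M i\<in>I. N)) (\<lambda>\<omega>. (\<lambda>i\<in>I. Z i \<omega>, \<lambda>i\<in>I. C i \<omega>))
      = distr M (\<Pi>\<^sub>M i\<in>I. count_space UNIV) (\<lambda>\<omega>. \<lambda>i\<in>I. Z i \<omega>) \<Otimes>\<^sub>M distr M (\<Pi>\<^sub>M i\<in>I. N) (\<lambda>\<omega>. \<lambda>i\<in>I. C i \<omega>)"
    and Z: "indep_vars (\<lambda>_. count_space UNIV) Z I" and C: "indep_vars (\<lambda>_. N) C I"
    and Z_law: "\<And>i. i \<in> A \<Longrightarrow> distr M (count_space UNIV) (Z i) = measure_pmf \<mu>"
    and S: "\<And>\<beta>. S \<beta> \<in> sets N"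
    and a: "\<And>\<beta> i. i \<in> A \<Longrightarrow> prob {\<omega>\<in>space M. C i \<omega> \<in> S \<beta>} = a \<beta>" "\<And>\<beta>. a \<beta> \<in> {0..1}"
  shows "distr M (count_space UNIV) (\<lambda>\<omega>. card {i\<in>A. C i \<omega> \<in> S (Z i \<omega>)})
       = measure_pmf (binomial_pmf (card A) (\<Sum>\<beta>\<in>UNIV. pmf \<mu> \<beta> * a \<beta>))"
proof -
  define q where "q = (\<Sum>\<beta>\<in>UNIV. pmf \<mu> \<beta> * a \<beta>)"
  have sum_pmf: "(\<Sum>\<beta>\<in>UNIV. pmf \<mu> \<beta>) = 1"
    by (rule sum_pmf_eq_1) auto
  have q: "q \<in> {0..1}"
  proof -
    have "q \<le> (\<Sum>\<beta>\<in>UNIV. pmf \<mu> \<beta>)"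
      unfolding q_def using a(2) by (intro sum_mono) (simp add: mult_left_le)
    then show ?thesis
      unfolding q_def sum_pmf using a(2) by (auto intro: sum_nonneg)
  qed
  have Z_rv: "random_variable (count_space UNIV) (Z i)" and C_rv: "random_variable N (C i)" if "i \<in> A" for i
    using Z C A that unfolding indep_vars_def by blast+
  have prob_Z: "prob {\<omega>\<in>space M. Z i \<omega> = \<beta>} = pmf \<mu> \<beta>" if "i \<in> A" for i \<beta>
    using measure_distr[OF Z_rv[OF that], of "{\<beta>}"]
    by (simp add: Z_law[OF that] measure_pmf_single vimage_def Int_def conj_commute)
  have prob_C_compl: "prob {\<omega>\<in>space M. C i \<omega> \<in> space N - S \<beta>} = 1 - a \<beta>" if "i \<in> A" for i \<beta>
  proof -
    have "{\<omega>\<in>space M. C i \<omega> \<in> space N - S \<beta>} = space M - {\<omega>\<in>space M. C i \<omega> \<in> S \<beta>}"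
      using measurable_space[OF C_rv[OF that]] by auto
    then show ?thesis
      using prob_compl measurable_sets[OF C_rv[OF that] S] a(1)[OF that]
      by (simp add: vimage_def Int_def conj_commute)
  qed
  have joint: "prob {\<omega>\<in>space M. \<forall>i\<in>A. (C i \<omega> \<in> S (Z i \<omega>)) = b i} = (\<Prod>i\<in>A. if b i then q else 1 - q)" for b
  proof -
    define R where "R \<beta> i = (if b i then S \<beta> else space N - S \<beta>)" for \<beta> i
    have "{\<omega>\<in>space M. \<forall>i\<in>A. (C i \<omega> \<in> S (Z i \<omega>)) = b i} = {\<omega>\<in>space M. \<forall>i\<in>A. C i \<omega> \<in> R (Z i \<omega>) i}"
      using measurable_space[OF C_rv] by (auto simp: R_def)
    also have "prob \<dots> = (\<Prod>i\<in>A. \<Sum>\<beta>\<in>UNIV. prob {\<omega>\<in>space M. Z i \<omega> = \<beta>} * prob {\<omega>\<in>space M. C i \<omega> \<in> R \<beta> i})"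
      using S by (intro prob_Ball_selected_eq_prod[OF I A ZC Z C]) (simp add: R_def)
    also have "\<dots> = (\<Prod>i\<in>A. if b i then q else 1 - q)"
    proof (rule prod.cong[OF refl])
      fix i assume i: "i \<in> A"
      have "(\<Sum>\<beta>\<in>UNIV. pmf \<mu> \<beta> * (1 - a \<beta>)) = (\<Sum>\<beta>\<in>UNIV. pmf \<mu> \<beta>) - q"
        unfolding q_def sum_subtractf[symmetric] by (simp add: right_diff_distrib)
      then have "(\<Sum>\<beta>\<in>UNIV. pmf \<mu> \<beta> * (1 - a \<beta>)) = 1 - q"
        unfolding sum_pmf .
      then show "(\<Sum>\<beta>\<in>UNIV. prob {\<omega>\<in>space M. Z i \<omega> = \<beta>} * prob {\<omega>\<in>space M. C i \<omega> \<in> R \<beta> i})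
          = (if b i then q else 1 - q)"
        using i by (cases "b i") (simp_all add: R_def prob_Z a(1) prob_C_compl q_def mult.commute del: Diff_iff)
    qed
    finally show ?thesis .
  qed
  have "random_variable (count_space UNIV) (\<lambda>\<omega>. C i \<omega> \<in> S (Z i \<omega>))" if "i \<in> A" for i
  proof -
    note [measurable] = Z_rv[OF that] C_rv[OF that] S
    show ?thesis by measurable
  qed
  then show ?thesis
    using distr_card_eq_binomial_pmf[OF finite_subset[OF A I] q _ joint] by (simp add: q_def)
qed

lemma (in prob_space) distr_card_selected_bernoulli_eq_binomial_pmf:
  fixes Z :: "'i \<Rightarrow> 'a \<Rightarrow> bool" and C :: "'i \<Rightarrow> 'a \<Rightarrow> 'c"
  assumes I: "finite I" and A: "A \<subseteq> I"
    and ZC: "distr M ((\<Pi>\<^sub>M i\<in>I. count_space UNIV) \<Otimes>\<^sub>M (\<Pi>\<^sub>M i\<in>I. N)) (\<lambda>\<omega>. (\<lambda>i\<in>I. Z i \<omega>, \<lambda>i\<in>I. C i \<omega>))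
      = distr M (\<Pi>\<^sub>M i\<in>I. count_space UNIV) (\<lambda>\<omega>. \<lambda>i\<in>I. Z i \<omega>) \<Otimes>\<^sub>M distr M (\<Pi>\<^sub>M i\<in>I. N) (\<lambda>\<omega>. \<lambda>i\<in>I. C i \<omega>)"
    and Z: "indep_vars (\<lambda>_. count_space UNIV) Z I" and C: "indep_vars (\<lambda>_. N) C I"
    and Z_law: "\<And>i. i \<in> A \<Longrightarrow> distr M (count_space UNIV) (Z i) = measure_pmf (bernoulli_pmf p)"
    and p: "p \<in> {0..1}"
    and S: "S1 \<in> sets N" "S0 \<in> sets N"
    and a1: "\<And>i. i \<in> A \<Longrightarrow> prob {\<omega>\<in>space M. C i \<omega> \<in> S1} = a1" "a1 \<in> {0..1}"
    and a0: "\<And>i. i \<in> A \<Longrightarrow> prob {\<omega>\<in>space M. C i \<omega> \<in> S0} = a0" "a0 \<in> {0..1}"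
  shows "distr M (count_space UNIV) (\<lambda>\<omega>. card {i\<in>A. C i \<omega> \<in> (if Z i \<omega> then S1 else S0)})
       = measure_pmf (binomial_pmf (card A) (p * a1 + (1 - p) * a0))"
proof -
  have "distr M (count_space UNIV) (\<lambda>\<omega>. card {i\<in>A. C i \<omega> \<in> (if Z i \<omega> then S1 else S0)})
      = measure_pmf (binomial_pmf (card A) (\<Sum>z\<in>UNIV. pmf (bernoulli_pmf p) z * (if z then a1 else a0)))"
    using S a1 a0
    by (intro distr_card_selected_eq_binomial_pmf[OF I A ZC Z C Z_law,
          where S="\<lambda>z. if z then S1 else S0" and a="\<lambda>z. if z then a1 else a0"]) auto
  then show ?thesis
    using p by (simp add: UNIV_bool add.commute)
qed

lemma tval_mem_image:
  assumes "1 \<le> k" "k \<le> Kval n T0"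
  shows "tval n T0 k \<in> T0 ` {..<n}"
proof -
  have "k - 1 < length (sorted_list_of_set (T0 ` {..<n}))"
    using assms by (simp add: Kval_def)
  then have "tval n T0 k \<in> set (sorted_list_of_set (T0 ` {..<n}))"
    unfolding tval_def by (rule nth_mem)
  then show ?thesis
    by simp
qed

lemma Wobs_ge_iff_under_null:
  assumes "T1 i = T0 i" "0 \<le> T0 i" "0 \<le> t"
  shows "ennreal t \<le> Wobs Z T1 T0 C1 C0 i \<omega> \<longleftrightarrow> t \<le> T0 i \<and> ennreal t \<le> Cobs Z C1 C0 i \<omega>"
  using assms by (auto simp: Wobs_def Tobs_def ennreal_le_iff)

lemma Delta_Wobs_eq_iff_under_null:
  assumes "T1 i = T0 i" "0 \<le> T0 i" "0 \<le> t"
  shows "Delta Z T1 T0 C1 C0 i \<omega> \<and> Wobs Z T1 T0 C1 C0 i \<omega> = ennreal t \<longleftrightarrow> T0 i = t \<and> ennreal t \<le> Cobs Z C1 C0 i \<omega>"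
  using assms by (auto simp: Delta_def Wobs_def Tobs_def min_def)

lemma Dcnt_under_null:
  assumes "\<forall>i<n. T1 i = T0 i" "\<forall>i<n. 0 \<le> T0 i" "0 \<le> t"
  shows "Dcnt n Z T1 T0 C1 C0 t = (\<lambda>\<omega>. card {i\<in>{i\<in>{..<n}. T0 i = t}. ennreal t \<le> Cobs Z C1 C0 i \<omega>})"
proof -
  have "Delta Z T1 T0 C1 C0 i \<omega> \<and> Wobs Z T1 T0 C1 C0 i \<omega> = ennreal t \<longleftrightarrow> T0 i = t \<and> ennreal t \<le> Cobs Z C1 C0 i \<omega>"
    if "i < n" for i \<omega>
    using assms that by (intro Delta_Wobs_eq_iff_under_null) auto
  then show ?thesis
    unfolding Dcnt_def by (intro ext arg_cong[where f=card]) blast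
qed

lemma Ncnt_under_null:
  assumes "\<forall>i<n. T1 i = T0 i" "\<forall>i<n. 0 \<le> T0 i" "0 \<le> t"
  shows "Ncnt n Z T1 T0 C1 C0 t = (\<lambda>\<omega>. card {i\<in>{i\<in>{..<n}. t \<le> T0 i}. ennreal t \<le> Cobs Z C1 C0 i \<omega>})"
proof -
  have "ennreal t \<le> Wobs Z T1 T0 C1 C0 i \<omega> \<longleftrightarrow> t \<le> T0 i \<and> ennreal t \<le> Cobs Z C1 C0 i \<omega>" if "i < n" for i \<omega>
    using assms that by (intro Wobs_ge_iff_under_null) auto
  then show ?thesis
    unfolding Ncnt_def by (intro ext arg_cong[where f=card]) blast
qed

lemma N1cnt_under_null:
  assumes "\<forall>i<n. T1 i = T0 i" "\<forall>i<n. 0 \<le> T0 i" "0 \<le> t"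
  shows "N1cnt n Z T1 T0 C1 C0 t = (\<lambda>\<omega>. card {i\<in>{i\<in>{..<n}. t \<le> T0 i}. Z i \<omega> \<and> ennreal t \<le> C1 i \<omega>})"
proof -
  have "Z i \<omega> \<and> ennreal t \<le> Wobs Z T1 T0 C1 C0 i \<omega> \<longleftrightarrow> t \<le> T0 i \<and> Z i \<omega> \<and> ennreal t \<le> C1 i \<omega>"
    if "i < n" for i \<omega>
    using assms that Wobs_ge_iff_under_null[of T1 i T0 t Z C1 C0 \<omega>] by (auto simp: Cobs_def)
  then show ?thesis
    unfolding N1cnt_def by (intro ext arg_cong[where f=card]) blast
qed

theorem lemmaA4:
  fixes M :: "'a measure" and n :: nat and p1 :: real
    and T1 T0 :: "nat \<Rightarrow> real"
    and Z :: "nat \<Rightarrow> 'a \<Rightarrow> bool"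
    and C1 C0 :: "nat \<Rightarrow> 'a \<Rightarrow> ennreal"
    and Cd :: "(ennreal \<times> ennreal) measure"
    and G1 G0 :: "real \<Rightarrow> real"
  assumes P: "prob_space M"
    and p1: "0 < p1" "p1 < 1"
    and Tnn: "\<And>i. i < n \<Longrightarrow> 0 \<le> T1 i" "\<And>i. i < n \<Longrightarrow> 0 \<le> T0 i"
    and H0: "\<And>i. i < n \<Longrightarrow> T1 i = T0 i"
    and Zmeas: "\<And>i. i < n \<Longrightarrow> Z i \<in> measurable M (count_space UNIV)"
    and Cmeas: "\<And>i. i < n \<Longrightarrow> C1 i \<in> borel_measurable M" "\<And>i. i < n \<Longrightarrow> C0 i \<in> borel_measurable M"
    \<comment> \<open>Assumption 1: given the censoring times, Z_i i.i.d. Bernoulli(p1)\<close>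
    and Zindep_C: "distr M (Pi\<^sub>M {..<n} (\<lambda>_. count_space UNIV) \<Otimes>\<^sub>M Pi\<^sub>M {..<n} (\<lambda>_. borel \<Otimes>\<^sub>M borel))
        (\<lambda>\<omega>. (\<lambda>i\<in>{..<n}. Z i \<omega>, \<lambda>i\<in>{..<n}. (C1 i \<omega>, C0 i \<omega>)))
      = distr M (Pi\<^sub>M {..<n} (\<lambda>_. count_space UNIV)) (\<lambda>\<omega>. \<lambda>i\<in>{..<n}. Z i \<omega>)
        \<Otimes>\<^sub>M distr M (Pi\<^sub>M {..<n} (\<lambda>_. borel \<Otimes>\<^sub>M borel)) (\<lambda>\<omega>. \<lambda>i\<in>{..<n}. (C1 i \<omega>, C0 i \<omega>))"
    and Zindep: "prob_space.indep_vars M (\<lambda>_. count_space UNIV) Z {..<n}"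
    and Zbern: "\<And>i. i < n \<Longrightarrow> distr M (count_space UNIV) (Z i) = measure_pmf (bernoulli_pmf p1)"
    \<comment> \<open>Assumption 2: the pairs (C_i(1), C_i(0)) are i.i.d.\<close>
    and Cindep: "prob_space.indep_vars M (\<lambda>_. borel \<Otimes>\<^sub>M borel) (\<lambda>i \<omega>. (C1 i \<omega>, C0 i \<omega>)) {..<n}"
    and Cident: "\<And>i. i < n \<Longrightarrow> distr M (borel \<Otimes>\<^sub>M borel) (\<lambda>\<omega>. (C1 i \<omega>, C0 i \<omega>)) = Cd"
    \<comment> \<open>G_z(c) = Pr(C_i(z) \<ge> c)\<close>
    and G1: "\<And>i c. i < n \<Longrightarrow> G1 c = measure M {\<omega> \<in> space M. ennreal c \<le> C1 i \<omega>}"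
    and G0: "\<And>i c. i < n \<Longrightarrow> G0 c = measure M {\<omega> \<in> space M. ennreal c \<le> C0 i \<omega>}"
    and k: "1 \<le> k" "k \<le> Kval n T0"
  shows "let t = tval n T0 k;
             g = p1 * G1 t + (1 - p1) * G0 t;
             \<phi> = p1 * G1 t / g
         in distr M (count_space UNIV) (Dcnt n Z T1 T0 C1 C0 t) = measure_pmf (binomial_pmf (dcnt n T0 t) g)
          \<and> distr M (count_space UNIV) (N1cnt n Z T1 T0 C1 C0 t) = measure_pmf (binomial_pmf (ncnt n T0 t) (g * \<phi>))
          \<and> distr M (count_space UNIV) (Ncnt n Z T1 T0 C1 C0 t) = measure_pmf (binomial_pmf (ncnt n T0 t) g)"
proof -
  interpret prob_space M by (rule P)
  define t where "t = tval n T0 k"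
  define g where "g = p1 * G1 t + (1 - p1) * G0 t"
  obtain j where j: "j < n" "T0 j = t"
    using tval_mem_image[OF k] unfolding t_def by auto
  have t: "0 \<le> t" using Tnn(2)[OF j(1)] j(2) by simp
  have G: "G1 t \<in> {0..1}" "G0 t \<in> {0..1}"
    using G1[OF j(1)] G0[OF j(1)] by auto
  define S1 S0 :: "(ennreal \<times> ennreal) set"
    where "S1 = {ennreal t..} \<times> UNIV" and "S0 = UNIV \<times> {ennreal t..}"
  have sets: "S1 \<in> sets (borel \<Otimes>\<^sub>M borel)" "S0 \<in> sets (borel \<Otimes>\<^sub>M borel)"
    unfolding S1_def S0_def by (auto intro: pair_measureI)
  have probs: "prob {\<omega>\<in>space M. (C1 i \<omega>, C0 i \<omega>) \<in> S1} = G1 t" "prob {\<omega>\<in>space M. (C1 i \<omega>, C0 i \<omega>) \<in> S0} = G0 t"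
    if "i < n" for i
    using G1[OF that] G0[OF that] by (simp_all add: S1_def S0_def)
  have uncensored: "ennreal t \<le> Cobs Z C1 C0 i \<omega> \<longleftrightarrow> (C1 i \<omega>, C0 i \<omega>) \<in> (if Z i \<omega> then S1 else S0)"
    "Z i \<omega> \<and> ennreal t \<le> C1 i \<omega> \<longleftrightarrow> (C1 i \<omega>, C0 i \<omega>) \<in> (if Z i \<omega> then S1 else {})" for i \<omega>
    by (simp_all add: Cobs_def S1_def S0_def)
  have null: "\<forall>i<n. T1 i = T0 i" "\<forall>i<n. 0 \<le> T0 i" using H0 Tnn(2) by auto
  note counts = Dcnt_under_null[OF null t] Ncnt_under_null[OF null t] N1cnt_under_null[OF null t]
  note binomial = distr_card_selected_bernoulli_eq_binomial_pmf[OF finite_lessThan _ Zindep_C Zindep Cindep]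
  have "distr M (count_space UNIV) (Dcnt n Z T1 T0 C1 C0 t) = measure_pmf (binomial_pmf (dcnt n T0 t) g)"
    unfolding counts uncensored dcnt_def g_def by (rule binomial) (use Zbern p1 sets probs G in auto)
  moreover have "distr M (count_space UNIV) (Ncnt n Z T1 T0 C1 C0 t) = measure_pmf (binomial_pmf (ncnt n T0 t) g)"
    unfolding counts uncensored ncnt_def g_def by (rule binomial) (use Zbern p1 sets probs G in auto)
  moreover have "distr M (count_space UNIV) (N1cnt n Z T1 T0 C1 C0 t)
      = measure_pmf (binomial_pmf (ncnt n T0 t) (p1 * G1 t + (1 - p1) * 0))"
    unfolding counts uncensored ncnt_def by (rule binomial) (use Zbern p1 sets probs G in auto)
  \<comment> \<open>If g = 0 then phi is 0 by division by zero, but then p1 * G1 t = 0 as well.\<close>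
  moreover have "g * (p1 * G1 t / g) = p1 * G1 t + (1 - p1) * 0"
    using G p1 by (auto simp: g_def add_nonneg_eq_0_iff)
  ultimately show ?thesis
    unfolding Let_def t_def[symmetric] g_def[symmetric] by simp
qed
end
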